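(* Let $a_0,a_1,b_0,b_1$ be real numbers such that $a(N)=a_1N+a_0>0$ and $b(N)=b_1N+b_0>0$ for all positive integers $N$, and let $k\ge1$ be an integer. Define the polynomial in $N$ $$\mathcal N_k(N):=\sum_{i=0}^{k-1}(-1)^i\binom{k-1}{i}\prod_{j=-k+1}^{-i-1}(2N+a(N)+b(N)+j-2)\prod_{j=-i}^{k-1-i}(N+j)(N+a(N)+j-1)\prod_{j=k-i}^{k-1}(2N+a(N)+b(N)+j-2).$$ Then the degree of $\mathcal N_k(N)$ in $N$ is $2k$.
   Context: Empty products equal $1$. *)

theory Defs
  imports "HOL-Computational_Algebra.Polynomial"
begin

text \<open>Factor 2N + a(N) + b(N) + j - 2 is the linear polynomial with constant term a0+b0+j-2
  and leading coefficient 2+a1+b1.\<close>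

definition factA :: "real \<Rightarrow> real \<Rightarrow> real \<Rightarrow> real \<Rightarrow> int \<Rightarrow> real poly" where
  "factA a0 a1 b0 b1 j = [: a0 + b0 + of_int j - 2, 2 + a1 + b1 :]"

definition factB :: "real \<Rightarrow> real \<Rightarrow> int \<Rightarrow> real poly" where
  "factB a0 a1 j = [: of_int j, 1 :] * [: a0 + of_int j - 1, 1 + a1 :]"

definition calN :: "real \<Rightarrow> real \<Rightarrow> real \<Rightarrow> real \<Rightarrow> nat \<Rightarrow> real poly" where
  "calN a0 a1 b0 b1 k =
     (\<Sum>i = 0..k-1. smult ((-1) ^ i * of_nat ((k-1) choose i))
        ((\<Prod>j \<in> {-int k + 1 .. -int i - 1}. factA a0 a1 b0 b1 j)
       * (\<Prod>j \<in> {-int i .. int k - 1 - int i}. factB a0 a1 j)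
       * (\<Prod>j \<in> {int k - int i .. int k - 1}. factA a0 a1 b0 b1 j)))"

end

theory Submission
  imports Defs "HOL-Number_Theory.Cong"
begin

text \<open>
  Each summand of \<open>N\<^sub>k(N)\<close> has degree \<open>3k - 1\<close>, so the claim is that the top
  \<open>k - 1\<close> coefficients cancel and the next one survives. Passing to reciprocal polynomials
  (\<open>t = 1/N\<close>) turns this into a statement about the lowest coefficients. Modulo \<open>t\<^sup>k\<close>
  the \<open>i\<close>-th reflected summand is \<open>H(t)\<close>, the reflected product of all the linear factors,
  times the product over the window \<open>j = -i, \<dots>, k - 1 - i\<close> of the quadratic factors divided
  by the linear ones. Writing \<open>j = l + x\<close> with \<open>l = 0, \<dots>, k - 1\<close> and \<open>x = -i\<close>, the
  coefficient of \<open>t\<^sup>r\<close> in that product is a polynomial in \<open>x\<close> of degree at most \<open>r\<close>.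
  The alternating binomial sum over \<open>i\<close> is a \<open>(k - 1)\<close>-st finite difference in \<open>x\<close>: it
  kills these coefficients for \<open>r < k - 1\<close>, and for \<open>r = k - 1\<close> it leaves \<open>(k - 1)!\<close> times
  the coefficient of \<open>y\<^sup>k\<^sup>-\<^sup>1\<close> in \<open>((1 + y)(\<alpha> + y)/(c + y))\<^sup>k\<close>, where
  \<open>c = 2 + a\<^sub>1 + b\<^sub>1\<close> and \<open>\<alpha> = 1 + a\<^sub>1\<close>. Positivity of \<open>a(N)\<close> and \<open>b(N)\<close>
  forces \<open>a\<^sub>1, b\<^sub>1 \<ge> 0\<close>, hence \<open>c > \<alpha> > 0\<close> and \<open>c > 1\<close>, and then that coefficient
  is positive.
\<close>

lemma coeff_mult_at_degree_bounds:
  fixes p q :: "'a::comm_semiring_1 poly"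
  assumes "degree p \<le> i" and "degree q \<le> j"
  shows "coeff (p * q) (i + j) = coeff p i * coeff q j"
proof (cases "degree p = i \<and> degree q = j")
  case True
  then show ?thesis
    using coeff_mult_degree_sum[of p q] by simp
next
  case False
  then have "degree (p * q) < i + j"
    using assms degree_mult_le[of p q] by linarith
  moreover have "degree p < i \<or> degree q < j"
    using False assms by linarith
  ultimately show ?thesis
    by (auto simp: coeff_eq_0)
qed

lemma coeff_mult_below_order:
  assumes "\<And>r. r < m \<Longrightarrow> coeff q r = 0" and "n < m"
  shows "coeff (p * q) n = 0"
  unfolding coeff_mult using assms by (intro sum.neutral) auto

lemma coeff_mult_at_order:
  assumes "\<And>r. r < m \<Longrightarrow> coeff q r = 0"
  shows "coeff (p * q) m = coeff p 0 * coeff q m"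
proof -
  have "coeff (p * q) m = (\<Sum>i\<le>m. if i = 0 then coeff p 0 * coeff q m else 0)"
    unfolding coeff_mult using assms by (intro sum.cong) auto
  then show ?thesis
    by simp
qed

lemma pCons_0_power: "[:0, u:] ^ k = monom (u ^ k) k"
  by (simp add: monom_power flip: monom_Suc monom_0)

lemma coeff_linear_power_nonneg:
  fixes a b :: "'a::linordered_semidom"
  assumes "0 \<le> a" and "0 \<le> b"
  shows "0 \<le> coeff ([:a, b:] ^ m) i"
proof (cases "i \<le> m")
  case True
  then show ?thesis
    using assms by (simp add: coeff_linear_poly_power)
next
  case False
  have "degree ([:a, b:] ^ m) \<le> degree [:a, b:] * m"
    by (rule degree_power_le)
  also have "\<dots> \<le> m"
    by simp
  finally have "degree ([:a, b:] ^ m) < i"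
    using False by simp
  then show ?thesis
    by (simp add: coeff_eq_0)
qed

lemma reflect_poly_linear: "b \<noteq> 0 \<Longrightarrow> reflect_poly [:a, b:] = [:b, a:]"
  by (rule poly_eqI) (auto simp: coeff_reflect_poly coeff_pCons split: nat.split)

lemma degree_sum_smult_by_reflection:
  fixes P :: "'b \<Rightarrow> 'a::field poly" and \<kappa> :: "'b \<Rightarrow> 'a" and I :: "'b set"
  defines "T \<equiv> (\<Sum>i\<in>I. smult (\<kappa> i) (reflect_poly (P i)))"
  assumes "\<And>i. i \<in> I \<Longrightarrow> degree (P i) = d" and "m \<le> d"
    and "\<And>r. r < m \<Longrightarrow> coeff T r = 0" and "coeff T m \<noteq> 0"
  shows "degree (\<Sum>i\<in>I. smult (\<kappa> i) (P i)) = d - m"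
proof -
  have coeff_sum_eq: "coeff (\<Sum>i\<in>I. smult (\<kappa> i) (P i)) n = (if n \<le> d then coeff T (d - n) else 0)" for n
  proof -
    have "coeff (P i) n = (if n \<le> d then coeff (reflect_poly (P i)) (d - n) else 0)" if "i \<in> I" for i
      using assms(2)[OF that] by (auto simp: coeff_reflect_poly coeff_eq_0)
    then show ?thesis
      unfolding T_def coeff_sum coeff_smult by (auto intro: sum.cong)
  qed
  show ?thesis
  proof (rule antisym)
    show "degree (\<Sum>i\<in>I. smult (\<kappa> i) (P i)) \<le> d - m"
      by (rule degree_le) (auto simp: coeff_sum_eq assms(4))
    show "d - m \<le> degree (\<Sum>i\<in>I. smult (\<kappa> i) (P i))"
      by (rule le_degree) (simp add: coeff_sum_eq assms(3,5))
  qed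
qed

section \<open>Congruences modulo a power of the variable\<close>

lemma coeff_eq_if_cong_monom:
  fixes p q :: "'a::field poly"
  assumes "[p = q] (mod monom 1 k)" and "r < k"
  shows "coeff p r = coeff q r"
proof -
  obtain h where "p - q = monom 1 k * h"
    using assms(1) unfolding cong_iff_dvd_diff by (rule dvdE)
  then have "coeff (p - q) r = 0"
    using assms(2) by (simp add: coeff_monom_mult)
  then show ?thesis
    by simp
qed

lemma cong_smult:
  fixes p q :: "'a::field poly"
  shows "[p = q] (mod m) \<Longrightarrow> [smult c p = smult c q] (mod m)"
  using cong_scalar_left[of p q m "[:c:]"] by simp

lemma truncated_geometric_cong:
  fixes u :: "'a::field"
  shows "[[:1, u:] * (\<Sum>r<k. [:0, - u:] ^ r) = 1] (mod monom 1 k)"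
proof -
  have "[:1, u:] * (\<Sum>r<k. [:0, - u:] ^ r) = (1 - [:0, - u:]) * (\<Sum>r<k. [:0, - u:] ^ r)"
    by (simp add: one_pCons)
  also have "\<dots> = 1 - [:0, - u:] ^ k"
    by (rule one_diff_power_eq[symmetric])
  finally have "[:1, u:] * (\<Sum>r<k. [:0, - u:] ^ r) = 1 - monom ((- u) ^ k) k"
    by (simp add: pCons_0_power)
  moreover have "monom 1 k dvd monom ((- u) ^ k) k"
    using dvd_smult[OF dvd_refl, of "monom 1 k" "(- u) ^ k"] by (simp add: smult_monom)
  ultimately show ?thesis
    by (simp add: cong_iff_dvd_diff)
qed

lemma linear_truncated_inverse_cong:
  fixes c v :: "'a::field"
  assumes "c \<noteq> 0"
  shows "[[:c, v:] * ([:1 / c:] * (\<Sum>r<k. [:0, - v / c:] ^ r)) = 1] (mod monom 1 k)"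
proof -
  have "[:c, v:] * [:1 / c:] = [:1, v / c:]"
    using assms by simp
  then show ?thesis
    using truncated_geometric_cong[of "v / c" k] by (simp only: mult.assoc[symmetric] minus_divide_left)
qed

lemma monom_mult_power_truncated_inverse_cong:
  fixes A G :: "'a::field poly"
  assumes "[A * G = 1] (mod monom 1 k)"
  shows "[monom 1 j * A ^ (2 * k - j) * G ^ k = monom 1 j * A ^ (k - j)] (mod monom 1 k)"
proof (cases "j \<le> k")
  case True
  then have "monom 1 j * A ^ (2 * k - j) * G ^ k = monom 1 j * A ^ (k - j) * (A * G) ^ k"
    by (simp add: power_mult_distrib power_add[symmetric] mult_2)
  also have "[\<dots> = monom 1 j * A ^ (k - j) * 1 ^ k] (mod monom 1 k)"
    using assms by (intro cong_mult cong_refl cong_pow)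
  finally show ?thesis
    by simp
next
  case False
  then have "monom 1 k dvd monom 1 j"
    using dvd_triv_left[of "monom 1 k" "monom 1 (j - k)"] by (simp add: mult_monom)
  then have "monom 1 k dvd monom 1 j * (A ^ (2 * k - j) * G ^ k - A ^ (k - j))"
    by (rule dvd_mult2)
  then show ?thesis
    by (simp add: cong_iff_dvd_diff right_diff_distrib mult.assoc)
qed

section \<open>Alternating binomial sums\<close>

definition alt_binomial_sum :: "nat \<Rightarrow> (nat \<Rightarrow> 'a::comm_ring_1) \<Rightarrow> 'a" where
  "alt_binomial_sum n f = (\<Sum>i\<le>n. (-1) ^ i * of_nat (n choose i) * f i)"

lemma alt_binomial_sum_Suc:
  "alt_binomial_sum (Suc n) f = alt_binomial_sum n (\<lambda>i. f i - f (Suc i))"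
proof -
  have "alt_binomial_sum n f = (\<Sum>i\<le>Suc n. (-1) ^ i * of_nat (n choose i) * f i)"
    by (simp add: alt_binomial_sum_def binomial_eq_0)
  also have "\<dots> = f 0 + (\<Sum>i\<le>n. (-1) ^ Suc i * of_nat (n choose Suc i) * f (Suc i))"
    by (subst sum.atMost_Suc_shift) simp
  finally have shifted:
    "(\<Sum>i\<le>n. (-1) ^ Suc i * of_nat (n choose Suc i) * f (Suc i)) = alt_binomial_sum n f - f 0"
    by simp
  have "alt_binomial_sum (Suc n) f
      = f 0 + (\<Sum>i\<le>n. (-1) ^ Suc i * of_nat (n choose i) * f (Suc i))
            + (\<Sum>i\<le>n. (-1) ^ Suc i * of_nat (n choose Suc i) * f (Suc i))"
    unfolding alt_binomial_sum_def sum.atMost_Suc_shift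
    by (simp add: sum.distrib[symmetric] algebra_simps)
  also have "\<dots> = alt_binomial_sum n (\<lambda>i. f i - f (Suc i))"
    unfolding shifted by (simp add: alt_binomial_sum_def sum_subtractf sum_negf algebra_simps)
  finally show ?thesis .
qed

lemma alt_binomial_sum_sum:
  "alt_binomial_sum n (\<lambda>i. \<Sum>x\<in>A. g x i) = (\<Sum>x\<in>A. alt_binomial_sum n (g x))"
  unfolding alt_binomial_sum_def sum_distrib_left by (rule sum.swap)

lemma alt_binomial_sum_cmult:
  "alt_binomial_sum n (\<lambda>i. c * g i) = c * alt_binomial_sum n g"
  unfolding alt_binomial_sum_def sum_distrib_left by (simp add: ac_simps)

lemma power_diff_power_pred:
  fixes x :: "'a::comm_ring_1"
  shows "x ^ d - (x - 1) ^ d = (\<Sum>e<d. - (of_nat (d choose e) * (-1) ^ (d - e)) * x ^ e)"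
proof -
  have "(x - 1) ^ d = (\<Sum>e\<le>d. of_nat (d choose e) * x ^ e * (-1) ^ (d - e))"
    using binomial_ring[of x "-1" d] by simp
  also have "\<dots> = (\<Sum>e<d. of_nat (d choose e) * (-1) ^ (d - e) * x ^ e) + x ^ d"
    by (simp add: lessThan_Suc_atMost[symmetric] ac_simps)
  finally show ?thesis
    by (simp add: sum_negf)
qed

lemma alt_binomial_sum_power:
  "d \<le> n \<Longrightarrow> alt_binomial_sum n (\<lambda>i. (- of_nat i) ^ d) = (if d = n then fact n else (0::'a::{comm_ring_1,ring_char_0}))"
proof (induction n arbitrary: d)
  case 0
  then show ?case
    by (simp add: alt_binomial_sum_def)
next
  case (Suc n)
  define cf :: "nat \<Rightarrow> 'a" where "cf e = - (of_nat (d choose e) * (-1) ^ (d - e))" for e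
  have "alt_binomial_sum (Suc n) (\<lambda>i. (- of_nat i) ^ d :: 'a)
      = alt_binomial_sum n (\<lambda>i. \<Sum>e<d. cf e * (- of_nat i) ^ e)"
  proof -
    have "(- of_nat i) ^ d - (- of_nat (Suc i)) ^ d = (\<Sum>e<d. cf e * (- of_nat i) ^ e :: 'a)" for i
    proof -
      have "- of_nat (Suc i) = (- of_nat i - 1 :: 'a)"
        by (simp add: algebra_simps)
      then show ?thesis
        unfolding cf_def by (simp only: power_diff_power_pred)
    qed
    then show ?thesis
      by (simp only: alt_binomial_sum_Suc)
  qed
  also have "\<dots> = (\<Sum>e<d. cf e * (if e = n then fact n else 0))"
    using Suc by (simp add: alt_binomial_sum_sum alt_binomial_sum_cmult)
  also have "\<dots> = (if d = Suc n then fact (Suc n) else 0)"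
    using Suc.prems by (auto simp: cf_def fact_Suc if_distrib algebra_simps cong: if_cong)
  finally show ?case .
qed

lemma alt_binomial_sum_poly:
  fixes Q :: "'a::{comm_ring_1,ring_char_0} poly"
  assumes "degree Q \<le> n"
  shows "alt_binomial_sum n (\<lambda>i. poly Q (- of_nat i)) = fact n * coeff Q n"
proof -
  have "poly Q x = (\<Sum>d\<le>n. coeff Q d * x ^ d)" for x
    unfolding poly_altdef using assms
    by (intro sum.mono_neutral_left) (auto simp: coeff_eq_0)
  then have "alt_binomial_sum n (\<lambda>i. poly Q (- of_nat i))
      = (\<Sum>d\<le>n. coeff Q d * alt_binomial_sum n (\<lambda>i. (- of_nat i) ^ d))"
    by (simp add: alt_binomial_sum_sum alt_binomial_sum_cmult)
  also have "\<dots> = fact n * coeff Q n"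
    by (simp add: alt_binomial_sum_power if_distrib cong: if_cong)
  finally show ?thesis .
qed

section \<open>Graded bivariate polynomials\<close>

text \<open>
  In \<open>'a poly poly\<close> the outer variable \<open>t\<close> plays the role of \<open>1/N\<close> and the inner
  variable \<open>x\<close> that of a shift of the factor index.
\<close>

definition graded :: "'a::zero poly poly \<Rightarrow> bool" where
  "graded P \<longleftrightarrow> (\<forall>r. degree (coeff P r) \<le> r)"

definition diagonal :: "'a::zero poly poly \<Rightarrow> 'a poly" where
  "diagonal P = Abs_poly (\<lambda>r. coeff (coeff P r) r)"

definition eval_inner :: "'a::comm_semiring_0 \<Rightarrow> 'a poly poly \<Rightarrow> 'a poly" where
  "eval_inner x P = map_poly (\<lambda>q. poly q x) P"

definition bilin :: "'a::comm_semiring_1 \<Rightarrow> 'a \<Rightarrow> 'a poly poly" where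
  "bilin a b = [:[:a:], [:b, 1:]:]"

lemma graded_0: "graded 0"
  by (simp add: graded_def)

lemma graded_1: "graded 1"
  by (simp add: graded_def)

lemma graded_const: "graded [:[:a:]:]"
  by (simp add: graded_def coeff_pCons split: nat.split)

lemma graded_bilin: "graded (bilin a b)"
  by (simp add: graded_def bilin_def coeff_pCons split: nat.split)

lemma graded_add: "graded P \<Longrightarrow> graded Q \<Longrightarrow> graded (P + Q)"
  by (auto simp: graded_def intro: order_trans[OF degree_add_le])

lemma graded_mult:
  fixes P Q :: "'a::comm_semiring_1 poly poly"
  assumes "graded P" and "graded Q"
  shows "graded (P * Q)"
  unfolding graded_def coeff_mult
proof (intro allI degree_sum_le)
  fix r i :: nat
  assume "i \<in> {..r}"
  then have "degree (coeff P i) + degree (coeff Q (r - i)) \<le> r"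
    using assms unfolding graded_def by (metis add_le_mono atMost_iff le_add_diff_inverse)
  then show "degree (coeff P i * coeff Q (r - i)) \<le> r"
    using degree_mult_le order_trans by blast
qed simp

lemma graded_sum: "(\<And>x. x \<in> A \<Longrightarrow> graded (f x)) \<Longrightarrow> graded (sum f A)"
  by (induction A rule: infinite_finite_induct) (auto intro: graded_0 graded_add)

lemma graded_prod:
  fixes f :: "'b \<Rightarrow> 'a::comm_semiring_1 poly poly"
  shows "(\<And>x. x \<in> A \<Longrightarrow> graded (f x)) \<Longrightarrow> graded (prod f A)"
  by (induction A rule: infinite_finite_induct) (auto intro: graded_1 graded_mult)

lemma graded_power:
  fixes P :: "'a::comm_semiring_1 poly poly"
  shows "graded P \<Longrightarrow> graded (P ^ n)"
  using graded_prod[of "{..<n}" "\<lambda>_. P"] by simp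

lemma coeff_diagonal: "coeff (diagonal P) r = coeff (coeff P r) r"
  unfolding diagonal_def by (subst coeff_Abs_poly[where n = "degree P"]) (auto simp: coeff_eq_0)

lemma diagonal_0: "diagonal 0 = 0"
  by (rule poly_eqI) (simp add: coeff_diagonal)

lemma diagonal_1: "diagonal 1 = 1"
  by (rule poly_eqI) (simp add: coeff_diagonal)

lemma diagonal_add: "diagonal (P + Q) = diagonal P + diagonal Q"
  by (rule poly_eqI) (simp add: coeff_diagonal)

lemma diagonal_mult:
  fixes P Q :: "'a::comm_semiring_1 poly poly"
  assumes "graded P" and "graded Q"
  shows "diagonal (P * Q) = diagonal P * diagonal Q"
proof (rule poly_eqI)
  fix r
  have "coeff (diagonal (P * Q)) r = (\<Sum>i\<le>r. coeff (coeff P i * coeff Q (r - i)) (i + (r - i)))"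
    by (simp add: coeff_diagonal coeff_mult coeff_sum)
  also have "\<dots> = (\<Sum>i\<le>r. coeff (coeff P i) i * coeff (coeff Q (r - i)) (r - i))"
    using assms unfolding graded_def by (intro sum.cong refl coeff_mult_at_degree_bounds) auto
  also have "\<dots> = coeff (diagonal P * diagonal Q) r"
    by (simp add: coeff_mult coeff_diagonal)
  finally show "coeff (diagonal (P * Q)) r = coeff (diagonal P * diagonal Q) r" .
qed

lemma diagonal_sum: "diagonal (sum f A) = (\<Sum>x\<in>A. diagonal (f x))"
  by (induction A rule: infinite_finite_induct) (auto simp: diagonal_0 diagonal_add)

lemma diagonal_prod:
  fixes f :: "'b \<Rightarrow> 'a::comm_semiring_1 poly poly"
  shows "(\<And>x. x \<in> A \<Longrightarrow> graded (f x)) \<Longrightarrow> diagonal (prod f A) = (\<Prod>x\<in>A. diagonal (f x))"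
  by (induction A rule: infinite_finite_induct)
    (auto simp: diagonal_1 diagonal_mult graded_prod)

lemma diagonal_power:
  fixes P :: "'a::comm_semiring_1 poly poly"
  shows "graded P \<Longrightarrow> diagonal (P ^ n) = diagonal P ^ n"
  using diagonal_prod[of "{..<n}" "\<lambda>_. P"] by simp

lemma diagonal_const: "diagonal [:[:a:]:] = [:a:]"
  by (rule poly_eqI) (simp add: coeff_diagonal coeff_pCons split: nat.split)

lemma diagonal_bilin: "diagonal (bilin a b) = [:a, 1:]"
  by (rule poly_eqI) (simp add: coeff_diagonal bilin_def coeff_pCons split: nat.split)

lemma coeff_eval_inner: "coeff (eval_inner x P) r = poly (coeff P r) x"
  by (simp add: eval_inner_def coeff_map_poly)

lemma eval_inner_0: "eval_inner x 0 = 0"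
  by (rule poly_eqI) (simp add: coeff_eval_inner)

lemma eval_inner_1: "eval_inner x 1 = 1"
  by (rule poly_eqI) (simp add: coeff_eval_inner)

lemma eval_inner_add: "eval_inner x (P + Q) = eval_inner x P + eval_inner x Q"
  by (rule poly_eqI) (simp add: coeff_eval_inner)

lemma eval_inner_mult:
  fixes P Q :: "'a::comm_semiring_1 poly poly"
  shows "eval_inner x (P * Q) = eval_inner x P * eval_inner x Q"
  by (rule poly_eqI) (simp add: coeff_eval_inner coeff_mult poly_sum)

lemma eval_inner_sum: "eval_inner x (sum f A) = (\<Sum>y\<in>A. eval_inner x (f y))"
  by (induction A rule: infinite_finite_induct) (auto simp: eval_inner_0 eval_inner_add)

lemma eval_inner_prod:
  fixes f :: "'b \<Rightarrow> 'a::comm_semiring_1 poly poly"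
  shows "eval_inner x (prod f A) = (\<Prod>y\<in>A. eval_inner x (f y))"
  by (induction A rule: infinite_finite_induct)
    (auto simp: eval_inner_1 eval_inner_mult)

lemma eval_inner_power:
  fixes P :: "'a::comm_semiring_1 poly poly"
  shows "eval_inner x (P ^ n) = eval_inner x P ^ n"
  using eval_inner_prod[of x "\<lambda>_. P" "{..<n}"] by simp

lemma eval_inner_const: "eval_inner x [:[:a:]:] = [:a:]"
  by (rule poly_eqI) (simp add: coeff_eval_inner coeff_pCons split: nat.split)

lemma eval_inner_bilin: "eval_inner x (bilin a b) = [:a, b + x:]"
  by (rule poly_eqI) (simp add: coeff_eval_inner bilin_def coeff_pCons split: nat.split)

lemma coeff_alt_binomial_sum_eval_inner:
  fixes P :: "'a::{comm_ring_1,ring_char_0} poly poly"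
  assumes "graded P" and "r \<le> n"
  shows "coeff (\<Sum>i\<le>n. smult ((-1) ^ i * of_nat (n choose i)) (eval_inner (- of_nat i) P)) r
       = (if r = n then fact n * coeff (diagonal P) n else 0)"
proof -
  have "degree (coeff P r) \<le> n"
    using assms unfolding graded_def by (metis order_trans)
  then have "alt_binomial_sum n (\<lambda>i. poly (coeff P r) (- of_nat i)) = fact n * coeff (coeff P r) n"
    by (rule alt_binomial_sum_poly)
  moreover have "coeff (coeff P r) n = 0" if "r < n"
    using assms(1) that unfolding graded_def by (metis coeff_eq_0 le_less_trans)
  ultimately show ?thesis
    using assms(2) by (auto simp: alt_binomial_sum_def coeff_sum coeff_eval_inner coeff_diagonal)
qed

section \<open>The leading coefficient\<close>

lemma power_product_expansion:
  fixes \<alpha> \<gamma> :: "'a::comm_ring_1"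
  shows "([:1, 1:] * [:\<alpha>, 1:]) ^ k =
    (\<Sum>p\<le>k. \<Sum>q\<le>k. smult (of_nat (k choose p) * of_nat (k choose q)
        * (1 - \<gamma>) ^ p * (1 - \<alpha> * \<gamma>) ^ q * \<alpha> ^ (k - q))
      (monom 1 (p + q) * [:1, \<gamma>:] ^ (2 * k - (p + q))))"
proof -
  have split: "[:1, 1:] = [:0, 1 - \<gamma>:] + [:1, \<gamma>:]" "[:\<alpha>, 1:] = [:0, 1 - \<alpha> * \<gamma>:] + smult \<alpha> [:1, \<gamma>:]"
    by simp_all
  have "([:1, 1:] * [:\<alpha>, 1:]) ^ k = [:1, 1:] ^ k * [:\<alpha>, 1:] ^ k"
    by (rule power_mult_distrib)
  also have "\<dots> = (\<Sum>p\<le>k. \<Sum>q\<le>k. of_nat (k choose p) * [:0, 1 - \<gamma>:] ^ p * [:1, \<gamma>:] ^ (k - p)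
      * (of_nat (k choose q) * [:0, 1 - \<alpha> * \<gamma>:] ^ q * smult \<alpha> [:1, \<gamma>:] ^ (k - q)))"
    unfolding split binomial_ring sum_product ..
  also have "\<dots> = (\<Sum>p\<le>k. \<Sum>q\<le>k. smult (of_nat (k choose p) * of_nat (k choose q)
        * (1 - \<gamma>) ^ p * (1 - \<alpha> * \<gamma>) ^ q * \<alpha> ^ (k - q))
      (monom 1 (p + q) * [:1, \<gamma>:] ^ (2 * k - (p + q))))"
  proof (intro sum.cong refl)
    fix p q
    assume "p \<in> {..k}" "q \<in> {..k}"
    then have powers: "[:1, \<gamma>:] ^ (k - p) * [:1, \<gamma>:] ^ (k - q) = [:1, \<gamma>:] ^ (2 * k - (p + q))"
      by (simp add: mult_2 flip: power_add)
    have monoms: "monom a p * (monom b q * X) = smult (a * b) (monom 1 (p + q) * X)" for a b :: 'a and X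
      by (simp add: smult_monom_mult mult.assoc[symmetric] mult_monom)
    show "of_nat (k choose p) * [:0, 1 - \<gamma>:] ^ p * [:1, \<gamma>:] ^ (k - p)
        * (of_nat (k choose q) * [:0, 1 - \<alpha> * \<gamma>:] ^ q * smult \<alpha> [:1, \<gamma>:] ^ (k - q))
      = smult (of_nat (k choose p) * of_nat (k choose q) * (1 - \<gamma>) ^ p * (1 - \<alpha> * \<gamma>) ^ q * \<alpha> ^ (k - q))
          (monom 1 (p + q) * [:1, \<gamma>:] ^ (2 * k - (p + q)))"
      unfolding pCons_0_power smult_power of_nat_poly powers[symmetric]
      by (simp add: ac_simps monoms)
  qed
  finally show ?thesis .
qed

text \<open>
  With \<open>\<gamma> = 1/c\<close> write \<open>1 + y = (1 - \<gamma>) y + (1 + \<gamma> y)\<close> and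
  \<open>\<alpha> + y = (1 - \<alpha>\<gamma>) y + \<alpha> (1 + \<gamma> y)\<close>. Since \<open>1 + \<gamma> y\<close> times the truncated
  geometric series is \<open>1\<close> modulo \<open>y\<^sup>k\<close>, the power becomes a sum of products of polynomials
  with nonnegative coefficients, one of which is \<open>\<alpha>\<^sup>k (1 + \<gamma> y)\<^sup>k\<close>.
\<close>

lemma coeff_truncated_ratio_power_pos:
  fixes \<alpha> c :: real
  assumes "0 < \<alpha>" and "\<alpha> < c" and "1 < c" and "1 \<le> k"
  shows "0 < coeff (([:1, 1:] * [:\<alpha>, 1:] * ([:1 / c:] * (\<Sum>r<k. [:0, - 1 / c:] ^ r))) ^ k) (k - 1)"
proof -
  define \<gamma> where "\<gamma> = 1 / c"
  define G where "G = (\<Sum>r<k. [:0, - \<gamma>:] ^ r)"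
  define K where "K p q = of_nat (k choose p) * of_nat (k choose q)
    * (1 - \<gamma>) ^ p * (1 - \<alpha> * \<gamma>) ^ q * \<alpha> ^ (k - q)" for p q
  define f where "f p q = K p q * coeff (monom 1 (p + q) * [:1, \<gamma>:] ^ (k - (p + q))) (k - 1)" for p q
  define M where "M = (\<Sum>p\<le>k. \<Sum>q\<le>k. smult (K p q) (monom 1 (p + q) * [:1, \<gamma>:] ^ (k - (p + q))))"
  have \<gamma>: "0 < \<gamma>" "\<gamma> \<le> 1" "\<alpha> * \<gamma> \<le> 1"
    using assms by (simp_all add: \<gamma>_def field_simps)
  have "([:1, 1:] * [:\<alpha>, 1:] * G) ^ k
      = (\<Sum>p\<le>k. \<Sum>q\<le>k. smult (K p q) (monom 1 (p + q) * [:1, \<gamma>:] ^ (2 * k - (p + q)) * G ^ k))"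
    unfolding power_mult_distrib[of "[:1, 1:] * [:\<alpha>, 1:]" G k] power_product_expansion[of \<alpha> k \<gamma>]
      sum_distrib_right mult_smult_left K_def ..
  also have "[\<dots> = M] (mod monom 1 k)"
    unfolding M_def using truncated_geometric_cong[of \<gamma> k]
    by (intro cong_sum cong_smult monom_mult_power_truncated_inverse_cong) (simp add: G_def)
  finally have "coeff (([:1, 1:] * [:\<alpha>, 1:] * G) ^ k) (k - 1) = coeff M (k - 1)"
    using assms(4) by (intro coeff_eq_if_cong_monom) auto
  also have "\<dots> = (\<Sum>p\<le>k. \<Sum>q\<le>k. f p q)"
    by (simp add: M_def f_def coeff_sum)
  finally have coeff_eq: "coeff (([:1, 1:] * [:\<alpha>, 1:] * G) ^ k) (k - 1) = (\<Sum>p\<le>k. \<Sum>q\<le>k. f p q)" .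
  have nonneg: "0 \<le> f p q" for p q
    using assms \<gamma> by (simp add: f_def K_def coeff_monom_mult coeff_linear_power_nonneg)
  have "0 < f 0 0"
    using assms \<gamma> by (simp add: f_def K_def coeff_linear_poly_power)
  also have "f 0 0 \<le> (\<Sum>q\<le>k. f 0 q)"
    by (rule member_le_sum) (auto intro: nonneg)
  also have "\<dots> \<le> (\<Sum>p\<le>k. \<Sum>q\<le>k. f p q)"
    by (rule member_le_sum[of 0 _ "\<lambda>p. \<Sum>q\<le>k. f p q"]) (auto intro: nonneg sum_nonneg)
  finally have "0 < coeff (([:1, 1:] * [:\<alpha>, 1:] * G) ^ k) (k - 1)"
    unfolding coeff_eq .
  moreover have "[:1, 1:] * [:\<alpha>, 1:] * ([:1 / c:] * (\<Sum>r<k. [:0, - 1 / c:] ^ r)) = smult \<gamma> ([:1, 1:] * [:\<alpha>, 1:] * G)"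
    by (simp add: \<gamma>_def G_def)
  ultimately show ?thesis
    using \<gamma> by (simp add: smult_power)
qed

section \<open>Products of truncated ratios over a window\<close>

text \<open>
  \<open>window_factor\<close> is the expansion modulo \<open>t\<^sup>k\<close> of
  \<open>(1 + (d + x) t)(\<alpha> + (e + x) t) / (c + (s + x) t)\<close>, the reflected
  quotient of a quadratic factor by a linear factor of \<open>N\<^sub>k\<close>.
\<close>

definition window_factor :: "nat \<Rightarrow> 'a::field \<Rightarrow> 'a \<Rightarrow> 'a \<Rightarrow> 'a \<Rightarrow> 'a \<Rightarrow> 'a poly poly" where
  "window_factor k c s \<alpha> d e =
     bilin 1 d * bilin \<alpha> e * ([:[:1 / c:]:] * (\<Sum>r<k. ([:[:- 1 / c:]:] * bilin 0 s) ^ r))"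

definition window_product :: "nat \<Rightarrow> 'a::field \<Rightarrow> 'a \<Rightarrow> 'a \<Rightarrow> 'a \<Rightarrow> 'a poly poly" where
  "window_product k c s \<alpha> e = (\<Prod>l<k. window_factor k c (s + of_nat l) \<alpha> (of_nat l) (e + of_nat l))"

lemma graded_window_factor: "graded (window_factor k c s \<alpha> d e)"
  unfolding window_factor_def
  by (intro graded_mult graded_sum graded_power graded_bilin graded_const)

lemma graded_window_product: "graded (window_product k c s \<alpha> e)"
  unfolding window_product_def by (intro graded_prod graded_window_factor)

lemma diagonal_window_factor:
  "diagonal (window_factor k c s \<alpha> d e) = [:1, 1:] * [:\<alpha>, 1:] * ([:1 / c:] * (\<Sum>r<k. [:0, - 1 / c:] ^ r))"
  unfolding window_factor_def
  by (simp only: diagonal_mult diagonal_sum diagonal_power diagonal_bilin diagonal_const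
      graded_mult graded_sum graded_power graded_bilin graded_const) simp

lemma diagonal_window_product:
  "diagonal (window_product k c s \<alpha> e) = ([:1, 1:] * [:\<alpha>, 1:] * ([:1 / c:] * (\<Sum>r<k. [:0, - 1 / c:] ^ r))) ^ k"
  unfolding window_product_def
  by (simp add: diagonal_prod graded_window_factor diagonal_window_factor)

lemma eval_inner_window_factor:
  "eval_inner x (window_factor k c s \<alpha> d e) =
     [:1, d + x:] * [:\<alpha>, e + x:] * ([:1 / c:] * (\<Sum>r<k. [:0, - (s + x) / c:] ^ r))"
proof -
  have "[:- 1 / c:] * [:0, s + x:] = [:0, - (s + x) / c:]"
    by (simp add: add_divide_distrib diff_divide_distrib)
  then show ?thesis
    unfolding window_factor_def
    by (simp only: eval_inner_mult eval_inner_sum eval_inner_power eval_inner_bilin eval_inner_const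
        add_0_left)
qed

lemma prod_int_window_reindex:
  "(\<Prod>j\<in>{- int i..int k - 1 - int i}. f j) = (\<Prod>l<k. f (int l - int i))"
  by (rule prod.reindex_bij_witness[of _ "\<lambda>l. int l - int i" "\<lambda>j. nat (j + int i)"]) auto

lemma eval_inner_window_product:
  "eval_inner (- of_nat i) (window_product k c s \<alpha> e) =
     (\<Prod>j\<in>{- int i..int k - 1 - int i}.
        [:1, of_int j:] * [:\<alpha>, e + of_int j:] * ([:1 / c:] * (\<Sum>r<k. [:0, - (s + of_int j) / c:] ^ r)))"
  unfolding prod_int_window_reindex window_product_def eval_inner_prod eval_inner_window_factor
  by (simp add: algebra_simps)

definition alt_window_sum :: "nat \<Rightarrow> 'a::field \<Rightarrow> 'a \<Rightarrow> 'a \<Rightarrow> 'a \<Rightarrow> 'a poly" where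
  "alt_window_sum k c s \<alpha> e =
     (\<Sum>i\<le>k - 1. smult ((-1) ^ i * of_nat ((k - 1) choose i)) (eval_inner (- of_nat i) (window_product k c s \<alpha> e)))"

lemma coeff_alt_window_sum_below:
  fixes c s \<alpha> e :: "'a::field_char_0"
  assumes "r < k - 1"
  shows "coeff (alt_window_sum k c s \<alpha> e) r = 0"
  using coeff_alt_binomial_sum_eval_inner[OF graded_window_product[of k c s \<alpha> e], of r "k - 1"] assms
  by (simp add: alt_window_sum_def)

lemma coeff_alt_window_sum_pos:
  fixes c s \<alpha> e :: real
  assumes "0 < \<alpha>" and "\<alpha> < c" and "1 < c" and "1 \<le> k"
  shows "0 < coeff (alt_window_sum k c s \<alpha> e) (k - 1)"
  using coeff_alt_binomial_sum_eval_inner[OF graded_window_product[of k c s \<alpha> e], of "k - 1" "k - 1"]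
    coeff_truncated_ratio_power_pos[OF assms]
  by (simp add: alt_window_sum_def diagonal_window_product)

section \<open>The polynomial \<open>N\<^sub>k\<close>\<close>

definition calN_term :: "real \<Rightarrow> real \<Rightarrow> real \<Rightarrow> real \<Rightarrow> nat \<Rightarrow> nat \<Rightarrow> real poly" where
  "calN_term a0 a1 b0 b1 k i =
     (\<Prod>j \<in> {- int k + 1 .. - int i - 1}. factA a0 a1 b0 b1 j)
   * (\<Prod>j \<in> {- int i .. int k - 1 - int i}. factB a0 a1 j)
   * (\<Prod>j \<in> {int k - int i .. int k - 1}. factA a0 a1 b0 b1 j)"

definition reflected_factA_prod :: "real \<Rightarrow> real \<Rightarrow> real \<Rightarrow> real \<Rightarrow> nat \<Rightarrow> real poly" where
  "reflected_factA_prod a0 a1 b0 b1 k = (\<Prod>j \<in> {- int k + 1 .. int k - 1}. reflect_poly (factA a0 a1 b0 b1 j))"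

lemma calN_eq_sum_calN_term:
  "calN a0 a1 b0 b1 k = (\<Sum>i\<le>k - 1. smult ((-1) ^ i * of_nat ((k - 1) choose i)) (calN_term a0 a1 b0 b1 k i))"
  unfolding calN_def calN_term_def atLeast0AtMost ..

lemma factA_eq: "factA a0 a1 b0 b1 j = [:a0 + b0 - 2 + of_int j, 2 + a1 + b1:]"
  by (simp add: factA_def algebra_simps)

lemma factB_eq: "factB a0 a1 j = [:of_int j, 1:] * [:a0 - 1 + of_int j, 1 + a1:]"
  by (simp add: factB_def algebra_simps)

lemma reflect_factA:
  assumes "2 + a1 + b1 \<noteq> 0"
  shows "reflect_poly (factA a0 a1 b0 b1 j) = [:2 + a1 + b1, a0 + b0 - 2 + of_int j:]"
  using assms by (simp add: factA_eq reflect_poly_linear)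

lemma reflect_factB:
  assumes "1 + a1 \<noteq> 0"
  shows "reflect_poly (factB a0 a1 j) = [:1, of_int j:] * [:1 + a1, a0 - 1 + of_int j:]"
  by (simp only: factB_eq reflect_poly_mult reflect_poly_linear[OF one_neq_zero] reflect_poly_linear[OF assms])

lemma degree_calN_term:
  assumes "1 + a1 \<noteq> 0" and "2 + a1 + b1 \<noteq> 0" and "i < k"
  shows "degree (calN_term a0 a1 b0 b1 k i) = 3 * k - 1"
proof -
  have "factA a0 a1 b0 b1 j \<noteq> 0" "degree (factA a0 a1 b0 b1 j) = 1" for j
    using assms by (simp_all add: factA_eq)
  moreover have "factB a0 a1 j \<noteq> 0" "degree (factB a0 a1 j) = 2" for j
    using assms by (simp_all add: factB_eq degree_mult_eq)
  ultimately have "degree (calN_term a0 a1 b0 b1 k i) = (k - 1 - i) + 2 * k + i"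
    unfolding calN_term_def using assms(3)
    by (simp add: degree_mult_eq degree_prod_eq_sum_degree)
  then show ?thesis
    using assms(3) by simp
qed

lemma prod_int_interval_split3:
  assumes "i < k"
  shows "(\<Prod>j\<in>{- int k + 1..int k - 1}. f j) =
     (\<Prod>j\<in>{- int k + 1..- int i - 1}. f j) * (\<Prod>j\<in>{- int i..int k - 1 - int i}. f j)
       * (\<Prod>j\<in>{int k - int i..int k - 1}. f j)"
proof -
  have split: "{- int k + 1..int k - 1}
      = {- int k + 1..- int i - 1} \<union> ({- int i..int k - 1 - int i} \<union> {int k - int i..int k - 1})"
    using assms by auto
  have "prod f ({- int i..int k - 1 - int i} \<union> {int k - int i..int k - 1})
      = prod f {- int i..int k - 1 - int i} * prod f {int k - int i..int k - 1}"
    by (rule prod.union_disjoint) auto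
  moreover have "prod f ({- int k + 1..- int i - 1} \<union> ({- int i..int k - 1 - int i} \<union> {int k - int i..int k - 1}))
      = prod f {- int k + 1..- int i - 1} * prod f ({- int i..int k - 1 - int i} \<union> {int k - int i..int k - 1})"
    by (rule prod.union_disjoint) auto
  ultimately show ?thesis
    unfolding split by (simp add: mult.assoc)
qed

lemma coeff_0_reflected_factA_prod:
  "2 + a1 + b1 \<noteq> 0 \<Longrightarrow> coeff (reflected_factA_prod a0 a1 b0 b1 k) 0 \<noteq> 0"
  by (simp add: reflected_factA_prod_def reflect_factA poly_0_coeff_0[symmetric] poly_prod)

text \<open>
  Dividing out the product of all linear factors leaves the quotients over the window, and
  modulo \<open>t\<^sup>k\<close> division by a reflected linear factor is multiplication by a truncated series.
\<close>

lemma reflect_calN_term_cong: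
  assumes "1 + a1 \<noteq> 0" and "2 + a1 + b1 \<noteq> 0" and "i < k"
  shows "[reflect_poly (calN_term a0 a1 b0 b1 k i) = reflected_factA_prod a0 a1 b0 b1 k
      * eval_inner (- of_nat i) (window_product k (2 + a1 + b1) (a0 + b0 - 2) (1 + a1) (a0 - 1))] (mod monom 1 k)"
proof -
  define c s where "c = 2 + a1 + b1" and "s = a0 + b0 - 2"
  define A B where "A j = reflect_poly (factA a0 a1 b0 b1 j)" and "B j = reflect_poly (factB a0 a1 j)" for j
  define inv where "inv j = [:1 / c:] * (\<Sum>r<k. [:0, - (s + of_int j) / c:] ^ r)" for j
  define S1 W S2 where "S1 = {- int k + 1 .. - int i - 1}" and "W = {- int i .. int k - 1 - int i}"
    and "S2 = {int k - int i .. int k - 1}"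
  have A_inv: "[A j * inv j = 1] (mod monom 1 k)" for j
    using linear_truncated_inverse_cong[of c "s + of_int j" k] assms(2)
    by (simp add: A_def inv_def c_def s_def reflect_factA)
  have "eval_inner (- of_nat i) (window_product k c s (1 + a1) (a0 - 1)) = (\<Prod>j\<in>W. B j * inv j)"
    unfolding eval_inner_window_product W_def B_def reflect_factB[OF assms(1)] inv_def ..
  moreover have "reflected_factA_prod a0 a1 b0 b1 k = prod A S1 * prod A W * prod A S2"
    unfolding reflected_factA_prod_def A_def S1_def W_def S2_def by (rule prod_int_interval_split3[OF assms(3)])
  ultimately have "reflected_factA_prod a0 a1 b0 b1 k * eval_inner (- of_nat i) (window_product k c s (1 + a1) (a0 - 1))
      = prod A S1 * prod A S2 * (\<Prod>j\<in>W. B j * (A j * inv j))"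
    by (simp add: prod.distrib ac_simps)
  also have "[\<dots> = prod A S1 * prod A S2 * (\<Prod>j\<in>W. B j * 1)] (mod monom 1 k)"
    by (intro cong_mult cong_refl cong_prod A_inv)
  also have "prod A S1 * prod A S2 * (\<Prod>j\<in>W. B j * 1) = reflect_poly (calN_term a0 a1 b0 b1 k i)"
    by (simp add: calN_term_def reflect_poly_mult reflect_poly_prod A_def B_def S1_def W_def S2_def ac_simps)
  finally show ?thesis
    by (simp add: cong_sym c_def s_def)
qed

definition reflected_calN :: "real \<Rightarrow> real \<Rightarrow> real \<Rightarrow> real \<Rightarrow> nat \<Rightarrow> real poly" where
  "reflected_calN a0 a1 b0 b1 k =
     (\<Sum>i\<le>k - 1. smult ((-1) ^ i * of_nat ((k - 1) choose i)) (reflect_poly (calN_term a0 a1 b0 b1 k i)))"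

lemma reflected_calN_cong:
  assumes "1 + a1 \<noteq> 0" and "2 + a1 + b1 \<noteq> 0" and "1 \<le> k"
  shows "[reflected_calN a0 a1 b0 b1 k = reflected_factA_prod a0 a1 b0 b1 k
      * alt_window_sum k (2 + a1 + b1) (a0 + b0 - 2) (1 + a1) (a0 - 1)] (mod monom 1 k)"
  unfolding reflected_calN_def alt_window_sum_def sum_distrib_left mult_smult_right
  using assms by (intro cong_sum cong_smult reflect_calN_term_cong) auto

lemma coeff_reflected_calN_below:
  assumes "0 \<le> a1" and "0 \<le> b1" and "1 \<le> k" and "r < k - 1"
  shows "coeff (reflected_calN a0 a1 b0 b1 k) r = 0"
proof -
  have "[reflected_calN a0 a1 b0 b1 k = reflected_factA_prod a0 a1 b0 b1 k
      * alt_window_sum k (2 + a1 + b1) (a0 + b0 - 2) (1 + a1) (a0 - 1)] (mod monom 1 k)"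
    using assms by (intro reflected_calN_cong) auto
  then show ?thesis
    using assms(4) coeff_mult_below_order[OF coeff_alt_window_sum_below assms(4)]
    by (simp add: coeff_eq_if_cong_monom)
qed

lemma coeff_reflected_calN_nonzero:
  assumes "0 \<le> a1" and "0 \<le> b1" and "1 \<le> k"
  shows "coeff (reflected_calN a0 a1 b0 b1 k) (k - 1) \<noteq> 0"
proof -
  let ?H = "reflected_factA_prod a0 a1 b0 b1 k"
  let ?E = "alt_window_sum k (2 + a1 + b1) (a0 + b0 - 2) (1 + a1) (a0 - 1)"
  have "[reflected_calN a0 a1 b0 b1 k = ?H * ?E] (mod monom 1 k)"
    using assms by (intro reflected_calN_cong) auto
  then have "coeff (reflected_calN a0 a1 b0 b1 k) (k - 1) = coeff ?H 0 * coeff ?E (k - 1)"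
    using assms(3) coeff_mult_at_order[of "k - 1" ?E ?H, OF coeff_alt_window_sum_below]
    by (simp add: coeff_eq_if_cong_monom)
  moreover have "coeff ?H 0 \<noteq> 0"
    using assms by (intro coeff_0_reflected_factA_prod) simp
  moreover have "0 < coeff ?E (k - 1)"
    using assms by (intro coeff_alt_window_sum_pos) auto
  ultimately show ?thesis
    by simp
qed

lemma slope_nonneg:
  fixes a b :: real
  assumes "\<And>N::nat. N \<ge> 1 \<Longrightarrow> a * real N + b > 0"
  shows "a \<ge> 0"
proof (rule ccontr)
  assume "\<not> a \<ge> 0"
  then have "a < 0"
    by simp
  obtain N :: nat where N: "max 1 (b / - a) < real N"
    using reals_Archimedean2 by blast
  then have "b < real N * - a"
    using \<open>a < 0\<close> by (simp add: field_simps)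
  moreover have "a * real N + b > 0"
    using N by (intro assms) simp
  ultimately show False
    by (simp add: algebra_simps)
qed

theorem lemma2:
  fixes a0 a1 b0 b1 :: real and k :: nat
  assumes "\<And>N::nat. N \<ge> 1 \<Longrightarrow> a1 * real N + a0 > 0"
      and "\<And>N::nat. N \<ge> 1 \<Longrightarrow> b1 * real N + b0 > 0"
      and "k \<ge> 1"
  shows "degree (calN a0 a1 b0 b1 k) = 2 * k"
proof -
  have slopes: "0 \<le> a1" "0 \<le> b1"
    using assms(1,2) by (blast intro: slope_nonneg)+
  have "degree (\<Sum>i\<le>k - 1. smult ((-1) ^ i * of_nat ((k - 1) choose i)) (calN_term a0 a1 b0 b1 k i))
      = (3 * k - 1) - (k - 1)"
  proof (rule degree_sum_smult_by_reflection)
    show "degree (calN_term a0 a1 b0 b1 k i) = 3 * k - 1" if "i \<in> {..k - 1}" for i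
      using slopes assms(3) that by (intro degree_calN_term) auto
  qed (use slopes assms(3) coeff_reflected_calN_below coeff_reflected_calN_nonzero
      in \<open>auto simp: reflected_calN_def\<close>)
  then show ?thesis
    using assms(3) by (simp add: calN_eq_sum_calN_term)
qed

end
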